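(* Let $0<\alpha\le\beta\le\pi$ and $f:S_\alpha\to S_\beta$, $f(z)=z^{\beta/\alpha}$. Then for all $x,y\in S_\alpha$, $$w_{S_\alpha}(x,y)\le w_{S_\beta}(f(x),f(y))\le\frac{\beta\sin(\alpha/2)}{\alpha\sin(\beta/2)}\,w_{S_\alpha}(x,y),$$ and the constants are sharp.
   Context: For $\theta\in(0,2\pi)$, $S_\theta=\{z\in\mathbb{C}:0<\arg z<\theta\}$ is the open sector; $z^{\beta/\alpha}$ uses the branch with $\arg z\in(0,\alpha)$. For a domain $G$ and $x\in G$, $d_G(x)=\inf\{|x-z|:z\in\partial G\}$; $S^1(x,r)$ is the circle of center $x$ and radius $r$. For convex $G$, $w_G(x,y)=\frac{|x-y|}{\min\{\inf_{\tilde y\in\tilde Y}|x-\tilde y|,\ \inf_{\tilde x\in\tilde X}|y-\tilde x|\}}$ with $\tilde X=\{\tilde x\in S^{1}(x,2d_G(x)):(x+\tilde x)/2\in\partial G\}$ and $\tilde Y=\{\tilde y\in S^{1}(y,2d_G(y)):(y+\tilde y)/2\in\partial G\}$. *)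

theory Defs
  imports "HOL-Analysis.Analysis"
begin

definition sector :: "real \<Rightarrow> complex set" where
  "sector \<theta> = {z. z \<noteq> 0 \<and> (\<exists>t. 0 < t \<and> t < \<theta> \<and> z = complex_of_real (cmod z) * cis t)}"

definition bdist :: "complex set \<Rightarrow> complex \<Rightarrow> real" where
  "bdist G x = infdist x (frontier G)"

definition reflpts :: "complex set \<Rightarrow> complex \<Rightarrow> complex set" where
  "reflpts G x = {x'. x' \<in> sphere x (2 * bdist G x) \<and> (x + x') / 2 \<in> frontier G}"

definition w_metric :: "complex set \<Rightarrow> complex \<Rightarrow> complex \<Rightarrow> real" where
  "w_metric G x y = dist x y /
     min (INF y'\<in>reflpts G y. dist x y') (INF x'\<in>reflpts G x. dist y x')"

text \<open>The power map z \<mapsto> z^(beta/alpha); for alpha \<le> pi the branch with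
  arg z in (0, alpha) agrees with the principal branch.\<close>
definition powmap :: "real \<Rightarrow> real \<Rightarrow> complex \<Rightarrow> complex" where
  "powmap \<alpha> \<beta> z = z powr complex_of_real (\<beta> / \<alpha>)"

end

theory Submission
  imports Defs
begin

text \<open>In polar coordinates \<open>x = r e\<^sup>i\<^sup>\<theta>\<close>, \<open>y = s e\<^sup>i\<^sup>\<phi>\<close> the nearest boundary points of
  \<open>S\<^sub>\<alpha>\<close> are the orthogonal projections onto the boundary rays, so the reflected points are
  mirror images and \<open>w\<close> has a closed form in \<open>m = ln (s/r) / 2\<close>, \<open>\<rho> = |\<theta> - \<phi>| / 2\<close> and
  the angular distance \<open>\<tau>\<close> of \<open>(\<theta> + \<phi>) / 2\<close> to the boundary. The power map with
  \<open>k = \<beta> / \<alpha> \<ge> 1\<close> multiplies \<open>m\<close>, \<open>\<rho>\<close>, \<open>\<tau>\<close> by \<open>k\<close>, so both bounds become real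
  inequalities: the lower one follows from \<open>sin (k x) \<le> k sin x\<close>, \<open>k sinh x \<le> sinh (k x)\<close> and the
  monotonicity of \<open>sin (k x) / sin x\<close>; the upper one also needs the monotonicity of
  \<open>x\<^sup>2 / sin\<^sup>2 x - x\<^sup>2 / 3\<close> and \<open>x\<^sup>2 / sinh\<^sup>2 x + x\<^sup>2 / 3\<close>. On the bisector (\<open>\<rho> = 0\<close>) the ratio of
  the two \<open>w\<close>-values tends to \<open>1\<close> as \<open>m \<rightarrow> \<infinity>\<close> and to the upper constant as \<open>m \<rightarrow> 0\<close>.\<close>

section \<open>Inequalities for sin and sinh\<close>

lemma sin_mult_le:
  fixes k x :: real
  assumes "1 \<le> k" "0 \<le> x" "k * x \<le> pi"
  shows "sin (k * x) \<le> k * sin x"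
proof -
  have "(\<lambda>x. k * sin x - sin (k * x)) 0 \<le> (\<lambda>x. k * sin x - sin (k * x)) x"
  proof (rule DERIV_nonneg_imp_nondecreasing[OF assms(2)])
    fix u assume u: "0 \<le> u" "u \<le> x"
    have "u \<le> k * u" "k * u \<le> k * x"
      using u assms by (auto simp: mult_le_cancel_right1 intro!: mult_left_mono)
    then have "cos (k * u) \<le> cos u"
      using u assms by (intro cos_monotone_0_pi_le) linarith+
    moreover have "((\<lambda>x. k * sin x - sin (k * x)) has_real_derivative
        k * (cos u - cos (k * u))) (at u)"
      by (auto intro!: derivative_eq_intros simp: algebra_simps)
    ultimately show "\<exists>y. ((\<lambda>x. k * sin x - sin (k * x)) has_real_derivative y) (at u) \<and> 0 \<le> y"
      using assms by force
  qed
  then show ?thesis by simp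
qed

lemma sinh_ge_self:
  fixes x :: real
  assumes "0 \<le> x"
  shows "x \<le> sinh x"
proof -
  have "(\<lambda>x. sinh x - x) 0 \<le> (\<lambda>x. sinh x - x) x"
  proof (rule DERIV_nonneg_imp_nondecreasing[OF assms])
    fix u :: real
    have "((\<lambda>x. sinh x - x) has_real_derivative (cosh u - 1)) (at u)"
      by (auto intro!: derivative_eq_intros)
    moreover have "0 \<le> cosh u - 1" using cosh_real_ge_1[of u] by linarith
    ultimately show "\<exists>y. ((\<lambda>x. sinh x - x) has_real_derivative y) (at u) \<and> 0 \<le> y" by blast
  qed
  then show ?thesis by simp
qed

lemma sinh_mult_ge:
  fixes k x :: real
  assumes "1 \<le> k" "0 \<le> x"
  shows "k * sinh x \<le> sinh (k * x)"
proof -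
  have "(\<lambda>x. sinh (k * x) - k * sinh x) 0 \<le> (\<lambda>x. sinh (k * x) - k * sinh x) x"
  proof (rule DERIV_nonneg_imp_nondecreasing[OF assms(2)])
    fix u assume u: "0 \<le> u" "u \<le> x"
    have "((\<lambda>x. sinh (k * x) - k * sinh x) has_real_derivative k * (cosh (k * u) - cosh u)) (at u)"
      by (auto intro!: derivative_eq_intros simp: algebra_simps)
    moreover have "cosh u \<le> cosh (k * u)"
      using u assms by (subst cosh_real_nonneg_le_iff) (auto simp: mult_le_cancel_right1)
    ultimately show "\<exists>y. ((\<lambda>x. sinh (k * x) - k * sinh x) has_real_derivative y) (at u) \<and> 0 \<le> y"
      using assms by force
  qed
  then show ?thesis by simp
qed

lemma sinh_mult_sq_ge:
  fixes k x :: real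
  assumes "1 \<le> k"
  shows "k\<^sup>2 * sinh x ^ 2 \<le> sinh (k * x) ^ 2"
proof -
  have "k\<^sup>2 * sinh x ^ 2 \<le> sinh (k * x) ^ 2" if "0 \<le> x" for x
  proof -
    have "(k * sinh x)\<^sup>2 \<le> sinh (k * x) ^ 2"
      using sinh_mult_ge[OF assms that] assms that by (intro power_mono) auto
    then show ?thesis by (simp add: power_mult_distrib)
  qed
  from this[of x] this[of "-x"] show ?thesis by (cases "0 \<le> x") auto
qed

lemma cos_mult_sin_le_sin_mult_cos:
  fixes k x :: real
  assumes "1 \<le> k" "0 \<le> x" "k * x \<le> pi"
  shows "k * cos (k * x) * sin x \<le> sin (k * x) * cos x"
proof -
  let ?n = "\<lambda>x. k * cos (k * x) * sin x - sin (k * x) * cos x"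
  have "?n x \<le> ?n 0"
  proof (rule DERIV_nonpos_imp_nonincreasing[OF assms(2)])
    fix u assume u: "0 \<le> u" "u \<le> x"
    have "(?n has_real_derivative (1 - k\<^sup>2) * (sin (k * u) * sin u)) (at u)"
      by (auto intro!: derivative_eq_intros simp: algebra_simps power2_eq_square)
    moreover have "u \<le> k * u" "k * u \<le> k * x"
      using u assms by (auto simp: mult_le_cancel_right1 intro!: mult_left_mono)
    then have "0 \<le> sin (k * u) * sin u"
      using u assms by (intro mult_nonneg_nonneg sin_ge_zero) linarith+
    moreover have "1 - k\<^sup>2 \<le> 0"
      using one_le_power[OF assms(1), of 2] by linarith
    ultimately show "\<exists>y. (?n has_real_derivative y) (at u) \<and> y \<le> 0"
      by (meson mult_nonpos_nonneg)
  qed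
  then show ?thesis by simp
qed

lemma sin_mult_div_sin_antimono:
  fixes k r t :: real
  assumes "1 \<le> k" "0 \<le> r" "r \<le> t" "t < pi" "k * t \<le> pi"
  shows "sin r * sin (k * t) \<le> sin (k * r) * sin t"
proof (cases "r = 0")
  case True
  then show ?thesis using assms by (simp add: sin_ge_zero)
next
  case False
  then have r: "0 < r" using assms by auto
  let ?q = "\<lambda>x. sin (k * x) / sin x"
  have "?q t \<le> ?q r"
  proof (rule DERIV_nonpos_imp_nonincreasing[OF assms(3)])
    fix u assume u: "r \<le> u" "u \<le> t"
    have "sin u > 0" using u r assms by (intro sin_gt_zero) auto
    then have "(?q has_real_derivative
        (k * cos (k * u) * sin u - sin (k * u) * cos u) / (sin u)\<^sup>2) (at u)"
      by (auto intro!: derivative_eq_intros simp: power2_eq_square algebra_simps)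
    moreover have "k * u \<le> k * t" using u assms by (intro mult_left_mono) auto
    then have "k * cos (k * u) * sin u - sin (k * u) * cos u \<le> 0"
      using cos_mult_sin_le_sin_mult_cos[OF assms(1), of u] u r assms by linarith
    ultimately show "\<exists>y. (?q has_real_derivative y) (at u) \<and> y \<le> 0"
      by (meson divide_nonpos_nonneg zero_le_power2)
  qed
  moreover have "sin r > 0" "sin t > 0" using r assms by (auto intro!: sin_gt_zero)
  ultimately show ?thesis by (simp add: field_simps)
qed

lemma t_cos_add_sin_cube_le:
  fixes t :: real
  assumes "0 \<le> t" "t \<le> pi"
  shows "3 * t * cos t + sin t ^ 3 \<le> 3 * sin t"
proof -
  let ?g = "\<lambda>t. 3 * sin t - 3 * t * cos t - sin t ^ 3"
  have "?g 0 \<le> ?g t"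
  proof (rule DERIV_nonneg_imp_nondecreasing[OF assms(1)])
    fix u assume u: "0 \<le> u" "u \<le> t"
    have "(?g has_real_derivative 3 * sin u * (u - sin u * cos u)) (at u)"
      by (auto intro!: derivative_eq_intros simp: algebra_simps power2_eq_square)
    moreover have "sin (2 * u) \<le> 2 * u" using u by (intro sin_x_le_x) auto
    then have "sin u * cos u \<le> u" by (simp add: sin_double)
    moreover have "0 \<le> sin u" using u assms by (intro sin_ge_zero) auto
    ultimately show "\<exists>y. (?g has_real_derivative y) (at u) \<and> 0 \<le> y" by force
  qed
  then show ?thesis by simp
qed

lemma t_cosh_le_sinh_cube_add:
  fixes t :: real
  assumes "0 \<le> t"
  shows "3 * t * cosh t \<le> sinh t ^ 3 + 3 * sinh t"
proof -
  let ?g = "\<lambda>t. sinh t ^ 3 + 3 * sinh t - 3 * t * cosh t"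
  have "?g 0 \<le> ?g t"
  proof (rule DERIV_nonneg_imp_nondecreasing[OF assms])
    fix u assume u: "0 \<le> u" "u \<le> t"
    have "(?g has_real_derivative 3 * sinh u * (sinh u * cosh u - u)) (at u)"
      by (auto intro!: derivative_eq_intros simp: algebra_simps power2_eq_square)
    moreover have "2 * u \<le> sinh (2 * u)" using u by (intro sinh_ge_self) auto
    then have "u \<le> sinh u * cosh u" by (simp add: sinh_double)
    ultimately show "\<exists>y. (?g has_real_derivative y) (at u) \<and> 0 \<le> y"
      using u by force
  qed
  then show ?thesis by simp
qed

lemma sq_div_sin_sq_diff_mono:
  fixes c d :: real
  assumes "0 < c" "c \<le> d" "d < pi"
  shows "c\<^sup>2 / sin c ^ 2 - c\<^sup>2 / 3 \<le> d\<^sup>2 / sin d ^ 2 - d\<^sup>2 / 3"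
proof (rule DERIV_nonneg_imp_nondecreasing[OF assms(2)])
  fix u assume u: "c \<le> u" "u \<le> d"
  have s: "sin u > 0" using u assms by (intro sin_gt_zero) auto
  then have "((\<lambda>x. x\<^sup>2 / sin x ^ 2 - x\<^sup>2 / 3) has_real_derivative
      2 * u * (3 * sin u - 3 * u * cos u - sin u ^ 3) / (3 * sin u ^ 3)) (at u)"
    by (auto intro!: derivative_eq_intros simp: field_simps power2_eq_square power3_eq_cube)
  moreover have "0 \<le> 3 * sin u - 3 * u * cos u - sin u ^ 3"
    using t_cos_add_sin_cube_le[of u] u assms by linarith
  ultimately show "\<exists>y. ((\<lambda>x. x\<^sup>2 / sin x ^ 2 - x\<^sup>2 / 3) has_real_derivative y) (at u) \<and> 0 \<le> y"
    using s u assms by (force intro!: divide_nonneg_pos)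
qed

lemma sq_div_sinh_sq_add_mono:
  fixes c d :: real
  assumes "0 < c" "c \<le> d"
  shows "c\<^sup>2 / sinh c ^ 2 + c\<^sup>2 / 3 \<le> d\<^sup>2 / sinh d ^ 2 + d\<^sup>2 / 3"
proof (rule DERIV_nonneg_imp_nondecreasing[OF assms(2)])
  fix u assume u: "c \<le> u" "u \<le> d"
  have s: "sinh u > 0" using u assms by auto
  then have "((\<lambda>x. x\<^sup>2 / sinh x ^ 2 + x\<^sup>2 / 3) has_real_derivative
      2 * u * (sinh u ^ 3 + 3 * sinh u - 3 * u * cosh u) / (3 * sinh u ^ 3)) (at u)"
    by (auto intro!: derivative_eq_intros simp: field_simps power2_eq_square power3_eq_cube)
  moreover have "0 \<le> sinh u ^ 3 + 3 * sinh u - 3 * u * cosh u"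
    using t_cosh_le_sinh_cube_add[of u] u assms by linarith
  ultimately show "\<exists>y. ((\<lambda>x. x\<^sup>2 / sinh x ^ 2 + x\<^sup>2 / 3) has_real_derivative y) (at u) \<and> 0 \<le> y"
    using s u assms by (force intro!: divide_nonneg_pos)
qed

lemma sin_mult_sq_bound:
  fixes k c :: real
  assumes "1 \<le> k" "0 < c" "k * c < pi"
  shows "(k\<^sup>2 - 1) * sin (k * c) ^ 2 * sin c ^ 2 \<le> 3 * (k\<^sup>2 * sin c ^ 2 - sin (k * c) ^ 2)"
proof -
  define a where "a = sin (k * c) ^ 2"
  define b where "b = sin c ^ 2"
  have kc: "c \<le> k * c" using assms by (simp add: mult_le_cancel_right1)
  then have "0 < sin (k * c)" "0 < sin c"
    using assms by (intro sin_gt_zero; linarith)+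
  then have "0 < a" "0 < b" unfolding a_def b_def by simp_all
  moreover have "c\<^sup>2 / b - c\<^sup>2 / 3 \<le> k\<^sup>2 * c\<^sup>2 / a - k\<^sup>2 * c\<^sup>2 / 3"
    using sq_div_sin_sq_diff_mono[of c "k * c"] assms kc
    unfolding a_def b_def by (simp add: power_mult_distrib)
  ultimately have "(c\<^sup>2 / b - c\<^sup>2 / 3) * (3 * a * b / c\<^sup>2)
      \<le> (k\<^sup>2 * c\<^sup>2 / a - k\<^sup>2 * c\<^sup>2 / 3) * (3 * a * b / c\<^sup>2)"
    using assms by (intro mult_right_mono) auto
  moreover have "(c\<^sup>2 / b - c\<^sup>2 / 3) * (3 * a * b / c\<^sup>2) = 3 * a - a * b"
    "(k\<^sup>2 * c\<^sup>2 / a - k\<^sup>2 * c\<^sup>2 / 3) * (3 * a * b / c\<^sup>2) = 3 * k\<^sup>2 * b - k\<^sup>2 * a * b"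
    using \<open>0 < a\<close> \<open>0 < b\<close> assms by (simp_all add: field_simps)
  ultimately have "3 * a - a * b \<le> 3 * k\<^sup>2 * b - k\<^sup>2 * a * b" by simp
  then show ?thesis unfolding a_def b_def by (simp add: algebra_simps)
qed

lemma sinh_mult_sq_bound:
  fixes k m :: real
  assumes "1 \<le> k"
  shows "3 * (sinh (k * m) ^ 2 - k\<^sup>2 * sinh m ^ 2) \<le> (k\<^sup>2 - 1) * sinh m ^ 2 * sinh (k * m) ^ 2"
proof -
  have "3 * (sinh (k * m) ^ 2 - k\<^sup>2 * sinh m ^ 2) \<le> (k\<^sup>2 - 1) * sinh m ^ 2 * sinh (k * m) ^ 2"
    if m: "0 < m" for m
  proof -
    define p where "p = sinh m ^ 2"
    define q where "q = sinh (k * m) ^ 2"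
    have km: "m \<le> k * m" using assms m by (simp add: mult_le_cancel_right1)
    then have "0 < p" "0 < q" unfolding p_def q_def using assms m by auto
    moreover have "m\<^sup>2 / p + m\<^sup>2 / 3 \<le> k\<^sup>2 * m\<^sup>2 / q + k\<^sup>2 * m\<^sup>2 / 3"
      using sq_div_sinh_sq_add_mono[of m "k * m"] m km
      unfolding p_def q_def by (simp add: power_mult_distrib)
    ultimately have "(m\<^sup>2 / p + m\<^sup>2 / 3) * (3 * p * q / m\<^sup>2)
        \<le> (k\<^sup>2 * m\<^sup>2 / q + k\<^sup>2 * m\<^sup>2 / 3) * (3 * p * q / m\<^sup>2)"
      by (intro mult_right_mono) auto
    moreover have "(m\<^sup>2 / p + m\<^sup>2 / 3) * (3 * p * q / m\<^sup>2) = 3 * q + p * q"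
      "(k\<^sup>2 * m\<^sup>2 / q + k\<^sup>2 * m\<^sup>2 / 3) * (3 * p * q / m\<^sup>2) = 3 * k\<^sup>2 * p + k\<^sup>2 * p * q"
      using \<open>0 < p\<close> \<open>0 < q\<close> m by (simp_all add: field_simps)
    ultimately have "3 * q + p * q \<le> 3 * k\<^sup>2 * p + k\<^sup>2 * p * q" by simp
    then show ?thesis unfolding p_def q_def by (simp add: algebra_simps)
  qed
  from this[of m] this[of "-m"] show ?thesis
    by (cases m "0 :: real" rule: linorder_cases) auto
qed

lemma sin_sq_diff:
  fixes a b :: real
  shows "sin a ^ 2 - sin b ^ 2 = sin (a + b) * sin (a - b)"
proof -
  have "sin (a + b) * sin (a - b) = sin a ^ 2 * cos b ^ 2 - cos a ^ 2 * sin b ^ 2"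
    by (simp add: sin_add sin_diff algebra_simps power2_eq_square)
  also have "\<dots> = sin a ^ 2 - sin b ^ 2" by (simp add: cos_squared_eq algebra_simps)
  finally show ?thesis by simp
qed

lemma sin_le_sin_between:
  fixes a b :: real
  assumes "0 \<le> a" "a \<le> b" "b \<le> pi - a"
  shows "sin a \<le> sin b"
proof (cases "b \<le> pi / 2")
  case True
  then show ?thesis using assms by (intro sin_monotone_2pi_le) auto
next
  case False
  have "sin a \<le> sin (pi - b)" using assms False by (intro sin_monotone_2pi_le) auto
  then show ?thesis by simp
qed

lemma sq_diff_eq_sinh_half_ln:
  fixes r s :: real
  assumes "0 < r" "0 < s"
  shows "(r - s)\<^sup>2 = 4 * r * s * sinh (ln (s / r) / 2) ^ 2"
proof -
  define e where "e = exp (ln (s / r) / 2)"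
  have "0 < e" unfolding e_def by simp
  have e2: "e\<^sup>2 = s / r" unfolding e_def using assms by (simp add: exp_double[symmetric])
  have sinh: "sinh (ln (s / r) / 2) = (e - 1 / e) / 2"
    unfolding e_def sinh_field_def by (simp add: exp_minus field_simps)
  have "sinh (ln (s / r) / 2) ^ 2 = ((e - 1 / e) / 2) ^ 2" by (simp only: sinh)
  also have "\<dots> = (e\<^sup>2 - 2 + 1 / e\<^sup>2) / 4"
    using \<open>0 < e\<close> by (simp add: field_simps power2_eq_square)
  also have "\<dots> = (s / r - 2 + r / s) / 4" using e2 by simp
  finally show ?thesis using assms by (simp add: field_simps power2_eq_square)
qed

lemma sin_mult_sq_diff_le:
  fixes k r t :: real
  assumes "1 \<le> k" "0 \<le> r" "r \<le> t" "k * t \<le> pi / 2"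
  shows "sin (k * t) ^ 2 - sin (k * r) ^ 2 \<le> k\<^sup>2 * (sin t ^ 2 - sin r ^ 2)"
proof -
  have kr: "0 \<le> k * r" "k * r \<le> k * t" using assms by (auto intro: mult_left_mono)
  have "k * (t + r) = k * t + k * r" "k * (t - r) = k * t - k * r"
    by (simp_all add: algebra_simps)
  then have sum: "k * (t + r) \<le> pi" and diff: "k * (t - r) \<le> pi"
    using kr assms(4) pi_gt_zero by auto
  have "0 \<le> t + r" "0 \<le> t - r" using assms by simp_all
  then have le: "sin (k * (t + r)) \<le> k * sin (t + r)" "sin (k * (t - r)) \<le> k * sin (t - r)"
    and nonneg: "0 \<le> sin (k * (t + r))" "0 \<le> sin (k * (t - r))"
    using sin_mult_le[OF assms(1)] sum diff assms by (auto intro!: sin_ge_zero)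
  have "sin (k * t) ^ 2 - sin (k * r) ^ 2 = sin (k * (t + r)) * sin (k * (t - r))"
    by (simp add: sin_sq_diff algebra_simps)
  also have "\<dots> \<le> (k * sin (t + r)) * (k * sin (t - r))"
    using le nonneg by (intro mult_mono) auto
  also have "\<dots> = k\<^sup>2 * (sin (t + r) * sin (t - r))"
    by (simp add: algebra_simps power2_eq_square)
  also have "\<dots> = k\<^sup>2 * (sin t ^ 2 - sin r ^ 2)"
    by (simp only: sin_sq_diff)
  finally show ?thesis .
qed

section \<open>Comparison of the polar expressions\<close>

definition w_polar_sq :: "real \<Rightarrow> real \<Rightarrow> real \<Rightarrow> real" where
  "w_polar_sq m \<rho> \<tau> = (sinh m ^ 2 + sin \<rho> ^ 2) / (sinh m ^ 2 + sin \<tau> ^ 2)"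

lemma shifted_sin_sq_cross_le:
  fixes k r t A A' :: real
  assumes k: "1 \<le> k" and r: "0 \<le> r" "r \<le> t" and kt: "k * t \<le> pi / 2"
    and A: "0 \<le> A" "k\<^sup>2 * A \<le> A'"
  shows "(A + sin r ^ 2) * (A' + sin (k * t) ^ 2) \<le> (A' + sin (k * r) ^ 2) * (A + sin t ^ 2)"
proof -
  have "t \<le> k * t" using k r by (simp add: mult_le_cancel_right1)
  with kt have t: "t \<le> k * t" "t \<le> pi / 2" by linarith+
  have "0 \<le> sin r" "sin r \<le> sin t" using r t by (auto intro!: sin_ge_zero sin_monotone_2pi_le)
  then have sin_sq: "sin r ^ 2 \<le> sin t ^ 2" by (intro power_mono)
  have "0 \<le> sin r * sin (k * t)" using k r t kt by (intro mult_nonneg_nonneg sin_ge_zero) auto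
  moreover have "t < pi" "k * t \<le> pi" using t kt pi_gt_zero by linarith+
  ultimately have "(sin r * sin (k * t))\<^sup>2 \<le> (sin (k * r) * sin t)\<^sup>2"
    using sin_mult_div_sin_antimono[OF k r] by (intro power_mono) auto
  then have cross: "sin r ^ 2 * sin (k * t) ^ 2 \<le> sin (k * r) ^ 2 * sin t ^ 2"
    by (simp add: power_mult_distrib)
  have "A * (sin (k * t) ^ 2 - sin (k * r) ^ 2) \<le> A * (k\<^sup>2 * (sin t ^ 2 - sin r ^ 2))"
    using sin_mult_sq_diff_le[OF k r kt] A by (intro mult_left_mono) auto
  moreover have "(k\<^sup>2 * A) * (sin t ^ 2 - sin r ^ 2) \<le> A' * (sin t ^ 2 - sin r ^ 2)"
    using A sin_sq by (intro mult_right_mono) auto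
  ultimately show ?thesis using cross by (simp add: algebra_simps)
qed

lemma sin_mult_sq_le:
  fixes k x :: real
  assumes "1 \<le> k" "0 \<le> x" "k * x \<le> pi"
  shows "sin (k * x) ^ 2 \<le> k\<^sup>2 * sin x ^ 2"
proof -
  have "0 \<le> sin (k * x)" using assms by (intro sin_ge_zero) auto
  then have "sin (k * x) ^ 2 \<le> (k * sin x) ^ 2"
    using sin_mult_le[OF assms] by (intro power_mono)
  then show ?thesis by (simp add: power_mult_distrib)
qed

lemma sin_sq_bound_shifted:
  fixes k c A A' :: real
  assumes k: "1 \<le> k" and c: "0 < c" "k * c < pi"
    and A: "0 \<le> A" "0 \<le> A'" "3 * (A' - k\<^sup>2 * A) \<le> (k\<^sup>2 - 1) * A * A'"
  shows "sin (k * c) ^ 2 * A' * (A + sin c ^ 2) \<le> k\<^sup>2 * sin c ^ 2 * A * (A' + sin (k * c) ^ 2)"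
proof -
  define a b where "a = sin (k * c) ^ 2" and "b = sin c ^ 2"
  have "c \<le> k * c" using k c by (simp add: mult_le_cancel_right1)
  then have "0 < sin (k * c)" "0 < sin c" using c by (intro sin_gt_zero; linarith)+
  then have ab: "0 < a" "0 < b" unfolding a_def b_def by simp_all
  have "a * b * (3 * (A' - k\<^sup>2 * A)) \<le> a * b * ((k\<^sup>2 - 1) * A * A')"
    using A(3) ab by (intro mult_left_mono) auto
  also have "\<dots> = (A * A') * ((k\<^sup>2 - 1) * a * b)" by (simp add: algebra_simps)
  also have "\<dots> \<le> (A * A') * (3 * (k\<^sup>2 * b - a))"
    using sin_mult_sq_bound[OF k c] A unfolding a_def b_def by (intro mult_left_mono) auto
  finally show ?thesis unfolding a_def[symmetric] b_def[symmetric] by (simp add: algebra_simps)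
qed

lemma shifted_sin_sq_cross_le_scaled:
  fixes k c r t A A' :: real
  assumes k: "1 \<le> k" and c: "0 < c" "k * c \<le> pi / 2" and r: "0 \<le> r" "r \<le> t" "t \<le> c"
    and A: "0 \<le> A" "k\<^sup>2 * A \<le> A'" "3 * (A' - k\<^sup>2 * A) \<le> (k\<^sup>2 - 1) * A * A'"
  shows "sin (k * c) ^ 2 * ((A' + sin (k * r) ^ 2) * (A + sin t ^ 2))
    \<le> k\<^sup>2 * sin c ^ 2 * ((A + sin r ^ 2) * (A' + sin (k * t) ^ 2))"
proof -
  define a b where "a = sin (k * c) ^ 2" and "b = sin c ^ 2"
  have "c \<le> k * c" using k c by (simp add: mult_le_cancel_right1)
  then have "0 < sin (k * c)" "0 < sin c" using c pi_gt_zero by (intro sin_gt_zero; linarith)+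
  then have a: "0 < a" and b: "0 < b" unfolding a_def b_def by simp_all
  have "0 \<le> k\<^sup>2 * A" using A by simp
  with A have A': "0 \<le> A'" by linarith
  have at_c: "(A + sin t ^ 2) * (A' + a) \<le> (A' + sin (k * t) ^ 2) * (A + b)"
    unfolding a_def b_def using shifted_sin_sq_cross_le[OF k _ r(3) c(2) A(1,2)] r by linarith
  have "k * r \<le> k * c" using k r by (intro mult_left_mono) auto
  then have sin_kr: "sin (k * r) ^ 2 \<le> k\<^sup>2 * sin r ^ 2"
    using sin_mult_sq_le[OF k r(1)] c pi_gt_zero by linarith
  have "k * c < pi" using c pi_gt_zero by linarith
  from sin_sq_bound_shifted[OF k c(1) this A(1) A' A(3)]
  have at_c_scaled: "a * A' * (A + b) \<le> k\<^sup>2 * b * A * (A' + a)" unfolding a_def b_def .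
  show ?thesis
  proof (cases "A = 0")
    case True
    with A A' have "A' = 0" by simp
    with True at_c have "sin t ^ 2 * a \<le> sin (k * t) ^ 2 * b" by simp
    then have "sin (k * r) ^ 2 * (a * sin t ^ 2) \<le> sin (k * r) ^ 2 * (sin (k * t) ^ 2 * b)"
      by (intro mult_left_mono) (auto simp: mult.commute)
    also have "\<dots> \<le> (k\<^sup>2 * sin r ^ 2) * (sin (k * t) ^ 2 * b)"
      using sin_kr b by (intro mult_right_mono) auto
    finally show ?thesis
      using True \<open>A' = 0\<close> unfolding a_def b_def by (simp add: algebra_simps)
  next
    case False
    with A have A_pos: "0 < A" by simp
    have "A * sin (k * r) ^ 2 \<le> (k\<^sup>2 * A) * sin r ^ 2"
      using sin_kr A_pos by (simp add: algebra_simps)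
    also have "\<dots> \<le> A' * sin r ^ 2" using A(2) by (intro mult_right_mono) auto
    finally have at_r: "A * (A' + sin (k * r) ^ 2) \<le> A' * (A + sin r ^ 2)"
      by (simp add: algebra_simps)
    have "(A * (A' + sin (k * r) ^ 2)) * ((A' + a) * (A + sin t ^ 2))
        \<le> (A' * (A + sin r ^ 2)) * ((A' + sin (k * t) ^ 2) * (A + b))"
      by (rule mult_mono[OF at_r]) (use at_c a A' A(1) in \<open>auto simp: mult.commute\<close>)
    then have "a * ((A * (A' + sin (k * r) ^ 2)) * ((A' + a) * (A + sin t ^ 2)))
        \<le> a * ((A' * (A + sin r ^ 2)) * ((A' + sin (k * t) ^ 2) * (A + b)))"
      using a by (intro mult_left_mono) auto
    also have "\<dots> = (a * A' * (A + b)) * ((A + sin r ^ 2) * (A' + sin (k * t) ^ 2))"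
      by (simp add: algebra_simps)
    also have "\<dots> \<le> (k\<^sup>2 * b * A * (A' + a)) * ((A + sin r ^ 2) * (A' + sin (k * t) ^ 2))"
      using at_c_scaled A(1) A' by (intro mult_right_mono) auto
    finally have "(A * (A' + a)) * (a * ((A' + sin (k * r) ^ 2) * (A + sin t ^ 2)))
        \<le> (A * (A' + a)) * (k\<^sup>2 * b * ((A + sin r ^ 2) * (A' + sin (k * t) ^ 2)))"
      by (simp add: algebra_simps)
    moreover have "0 < A * (A' + a)" using A_pos a A' by simp
    ultimately show ?thesis unfolding a_def b_def by (simp add: mult_le_cancel_left_pos)
  qed
qed

lemma w_polar_sq_le_scaled:
  fixes k \<alpha> m \<rho> \<tau> :: real
  assumes "1 \<le> k" "0 \<le> \<rho>" "\<rho> \<le> \<tau>" "0 < \<tau>" "k * \<tau> \<le> pi / 2"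
  shows "w_polar_sq m \<rho> \<tau> \<le> w_polar_sq (k * m) (k * \<rho>) (k * \<tau>)"
proof -
  have "\<tau> \<le> k * \<tau>" using assms by (simp add: mult_le_cancel_right1)
  then have "0 < sin \<tau>" "0 < sin (k * \<tau>)" using assms pi_gt_zero by (intro sin_gt_zero; linarith)+
  then have "0 < sinh m ^ 2 + sin \<tau> ^ 2" "0 < sinh (k * m) ^ 2 + sin (k * \<tau>) ^ 2"
    by (simp_all add: add_nonneg_pos)
  moreover have "(sinh m ^ 2 + sin \<rho> ^ 2) * (sinh (k * m) ^ 2 + sin (k * \<tau>) ^ 2)
      \<le> (sinh (k * m) ^ 2 + sin (k * \<rho>) ^ 2) * (sinh m ^ 2 + sin \<tau> ^ 2)"
    using assms sinh_mult_sq_ge[OF assms(1)] by (intro shifted_sin_sq_cross_le) auto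
  ultimately show ?thesis unfolding w_polar_sq_def by (simp add: divide_simps)
qed

lemma w_polar_sq_scaled_le:
  fixes k \<alpha> m \<rho> \<tau> :: real
  assumes "1 \<le> k" "0 < \<alpha>" "k * \<alpha> \<le> pi" "0 \<le> \<rho>" "\<rho> \<le> \<tau>" "0 < \<tau>" "\<tau> \<le> \<alpha> / 2"
  shows "w_polar_sq (k * m) (k * \<rho>) (k * \<tau>)
    \<le> (k * sin (\<alpha> / 2) / sin (k * (\<alpha> / 2)))\<^sup>2 * w_polar_sq m \<rho> \<tau>"
proof -
  have "k * (\<alpha> / 2) \<le> pi / 2" using assms by simp
  moreover have "\<alpha> / 2 \<le> k * (\<alpha> / 2)" using assms by (simp add: mult_le_cancel_right1)
  moreover have "\<tau> \<le> k * \<tau>" "k * \<tau> \<le> k * (\<alpha> / 2)"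
    using assms by (auto simp: mult_le_cancel_right1 intro: mult_left_mono)
  ultimately have "0 < sin (k * (\<alpha> / 2))" "0 < sin \<tau>" "0 < sin (k * \<tau>)"
    using assms pi_gt_zero by (intro sin_gt_zero; linarith)+
  then have "0 < sinh m ^ 2 + sin \<tau> ^ 2" "0 < sinh (k * m) ^ 2 + sin (k * \<tau>) ^ 2"
    by (simp_all add: add_nonneg_pos)
  moreover have "sin (k * (\<alpha> / 2)) ^ 2 * ((sinh (k * m) ^ 2 + sin (k * \<rho>) ^ 2) * (sinh m ^ 2 + sin \<tau> ^ 2))
      \<le> k\<^sup>2 * sin (\<alpha> / 2) ^ 2 * ((sinh m ^ 2 + sin \<rho> ^ 2) * (sinh (k * m) ^ 2 + sin (k * \<tau>) ^ 2))"
    using assms sinh_mult_sq_ge[OF assms(1)] sinh_mult_sq_bound[OF assms(1)]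
    by (intro shifted_sin_sq_cross_le_scaled) auto
  ultimately show ?thesis
    using \<open>0 < sin (k * (\<alpha> / 2))\<close> unfolding w_polar_sq_def
    by (simp add: divide_simps power_mult_distrib power_divide mult_ac)
qed

section \<open>Geometry of a sector\<close>

text \<open>\<open>reflect \<alpha>\<close> is the reflection in the line through 0 at angle \<open>\<alpha> / 2\<close>, which swaps the
  boundary rays of \<open>S\<^sub>\<alpha>\<close>: \<open>Im (reflect \<alpha> z)\<close> is the signed distance from \<open>z\<close> to the line
  through the ray at angle \<open>\<alpha>\<close>, and \<open>reflect \<alpha> (cnj (reflect \<alpha> z))\<close> is the mirror image of
  \<open>z\<close> in that line.\<close>
definition reflect :: "real \<Rightarrow> complex \<Rightarrow> complex" where
  "reflect a z = cis a * cnj z"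

lemma reflect_reflect [simp]: "reflect a (reflect a z) = z"
proof -
  have "reflect a (reflect a z) = (cis a * cis (- a)) * z"
    by (simp add: reflect_def cis_cnj mult.assoc)
  then show ?thesis by (simp add: cis_mult)
qed

lemma dist_reflect [simp]: "dist (reflect a z) (reflect a w) = dist z w"
proof -
  have "reflect a z - reflect a w = cis a * cnj (z - w)"
    by (simp add: reflect_def algebra_simps)
  then show ?thesis by (simp add: dist_norm norm_mult del: complex_cnj_diff)
qed

lemma Im_reflect: "Im (reflect a z) = Re z * sin a - Im z * cos a"
  by (simp add: reflect_def)

lemma reflect_midpoint: "reflect a ((z + w) / 2) = (reflect a z + reflect a w) / 2"
  by (simp add: reflect_def field_simps)

lemma reflect_polar: "reflect a (of_real r * cis t) = of_real r * cis (a - t)"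
  by (simp add: reflect_def cis_cnj cis_mult)

lemma abs_Im_le_dist_real:
  assumes "Im m = 0"
  shows "\<bar>Im y\<bar> \<le> dist y m"
  using abs_Im_le_cmod[of "y - m"] assms by (simp add: dist_norm)

lemma dist_eq_Im_imp_foot:
  assumes "Im m = 0" "dist y m = Im y"
  shows "m = of_real (Re y)"
proof -
  have "(Im y)\<^sup>2 = (Re y - Re m)\<^sup>2 + (Im y)\<^sup>2"
    using cmod_power2[of "y - m"] assms by (simp add: dist_norm)
  then show ?thesis using assms by (simp add: complex_eq_iff)
qed

lemma dist_cnj_self: "dist y (cnj y) = 2 * \<bar>Im y\<bar>"
  by (simp add: dist_norm complex_diff_cnj norm_mult)

lemma dist_cnj_commute: "dist y (cnj x) = dist x (cnj y)"
  by (metis complex_cnj_cnj complex_cnj_diff complex_mod_cnj dist_commute dist_norm)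

lemma dist_cnj_sq: "dist x (cnj y) ^ 2 = dist x y ^ 2 + 4 * Im x * Im y"
  unfolding dist_norm cmod_power2 by (simp add: power2_eq_square algebra_simps)

lemma dist_reflect_cnj_reflect: "dist x (reflect a (cnj (reflect a y))) = dist (reflect a x) (cnj (reflect a y))"
  by (metis dist_reflect reflect_reflect)

lemma polar_in_sector:
  assumes "0 < r" "0 < t" "t < \<alpha>"
  shows "of_real r * cis t \<in> sector \<alpha>"
proof -
  let ?z = "of_real r * cis t"
  have "?z = of_real (cmod ?z) * cis t" "?z \<noteq> 0" using assms by (simp_all add: norm_mult)
  then show ?thesis unfolding sector_def using assms(2,3) by (metis (mono_tags, lifting) mem_Collect_eq)
qed

lemma sector_polarE:
  assumes "z \<in> sector \<alpha>"
  obtains r t where "0 < r" "0 < t" "t < \<alpha>" "z = of_real r * cis t"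
proof -
  from assms obtain t where "z \<noteq> 0" "0 < t" "t < \<alpha>" "z = of_real (cmod z) * cis t"
    unfolding sector_def by blast
  then show ?thesis using that[of "cmod z" t] by auto
qed

lemma Re_mult_sin_nonneg:
  assumes "0 < Im u" "Im u \<le> Im (reflect a u)"
  shows "0 \<le> Re u * sin a"
proof -
  have "0 \<le> 1 + cos a" using cos_ge_minus_one[of a] by linarith
  with assms have "0 \<le> Im u * (1 + cos a)" by simp
  then show ?thesis using assms(2) unfolding Im_reflect by (simp add: algebra_simps)
qed

context
  fixes \<alpha> :: real
  assumes \<alpha>: "0 < \<alpha>" "\<alpha> \<le> pi"
begin

lemma mem_sector: "z \<in> sector \<alpha> \<longleftrightarrow> 0 < Im z \<and> 0 < Im (reflect \<alpha> z)"
proof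
  assume "z \<in> sector \<alpha>"
  then obtain r t where z: "0 < r" "0 < t" "t < \<alpha>" "z = of_real r * cis t"
    by (rule sector_polarE)
  moreover have "0 < sin t" "0 < sin (\<alpha> - t)" using z \<alpha> by (auto intro!: sin_gt_zero)
  ultimately show "0 < Im z \<and> 0 < Im (reflect \<alpha> z)" by (simp add: reflect_polar)
next
  assume i: "0 < Im z \<and> 0 < Im (reflect \<alpha> z)"
  have "0 < Arg z" "Arg z < pi" using i Arg_lt_pi by blast+
  moreover have "z = of_real (cmod z) * cis (Arg z)" by (metis rcis_cmod_Arg rcis_def)
  moreover have "0 < cmod z" using i by auto
  ultimately obtain r t where z: "z = of_real r * cis t" "0 < r" "0 < t" "t < pi" by blast
  have "0 < sin (\<alpha> - t)" using i z by (simp add: reflect_polar zero_less_mult_iff)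
  moreover have "sin (\<alpha> - t) \<le> 0" if "\<alpha> \<le> t"
    using sin_ge_zero[of "t - \<alpha>"] sin_minus[of "t - \<alpha>"] that z \<alpha> by simp
  ultimately have "t < \<alpha>" by linarith
  then show "z \<in> sector \<alpha>" using z by (simp add: polar_in_sector)
qed

lemma open_sector: "open (sector \<alpha>)"
proof -
  have "sector \<alpha> = {z. 0 < Im z} \<inter> {z. 0 < Im (reflect \<alpha> z)}"
    using mem_sector by blast
  moreover have "open ({z. 0 < Im z} \<inter> {z. 0 < Im (reflect \<alpha> z)})"
    unfolding Im_reflect by (intro open_Int open_Collect_less continuous_intros)
  ultimately show ?thesis by simp
qed

lemma closure_sector: "closure (sector \<alpha>) = {z. 0 \<le> Im z \<and> 0 \<le> Im (reflect \<alpha> z)}"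
  (is "_ = ?C")
proof
  have "closed ({z. 0 \<le> Im z} \<inter> {z. 0 \<le> Im (reflect \<alpha> z)})"
    unfolding Im_reflect by (intro closed_Int closed_Collect_le continuous_intros)
  then show "closure (sector \<alpha>) \<subseteq> ?C"
    using mem_sector by (intro closure_minimal) (auto simp: Collect_conj_eq[symmetric])
next
  show "?C \<subseteq> closure (sector \<alpha>)"
  proof
    fix z assume z: "z \<in> ?C"
    have s: "0 < sin (\<alpha> / 2)" using \<alpha> by (intro sin_gt_zero) auto
    show "z \<in> closure (sector \<alpha>)" unfolding closure_approachable
    proof (intro allI impI)
      fix e :: real assume e: "0 < e"
      let ?y = "z + of_real (e / 2) * cis (\<alpha> / 2)"
      have "Im (reflect \<alpha> ?y) = Im (reflect \<alpha> z) + e / 2 * (sin \<alpha> * cos (\<alpha> / 2) - cos \<alpha> * sin (\<alpha> / 2))"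
        by (simp add: Im_reflect algebra_simps)
      also have "sin \<alpha> * cos (\<alpha> / 2) - cos \<alpha> * sin (\<alpha> / 2) = sin (\<alpha> / 2)"
        using sin_diff[of \<alpha> "\<alpha> / 2"] by simp
      finally have "Im (reflect \<alpha> ?y) = Im (reflect \<alpha> z) + e / 2 * sin (\<alpha> / 2)" .
      moreover have "Im ?y = Im z + e / 2 * sin (\<alpha> / 2)" by simp
      moreover have "0 < e / 2 * sin (\<alpha> / 2)" using e s by simp
      ultimately have "?y \<in> sector \<alpha>" using z unfolding mem_sector by simp
      moreover have "dist ?y z < e" using e by (simp add: dist_norm norm_mult)
      ultimately show "\<exists>y\<in>sector \<alpha>. dist y z < e" by blast
    qed
  qed
qed

lemma frontier_sector:
  "m \<in> frontier (sector \<alpha>) \<longleftrightarrow>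
     0 \<le> Im m \<and> 0 \<le> Im (reflect \<alpha> m) \<and> (Im m = 0 \<or> Im (reflect \<alpha> m) = 0)"
proof -
  have "m \<in> frontier (sector \<alpha>) \<longleftrightarrow> m \<in> closure (sector \<alpha>) \<and> m \<notin> sector \<alpha>"
    by (simp add: frontier_def interior_open[OF open_sector])
  then show ?thesis unfolding closure_sector mem_sector by auto
qed

lemma real_foot_in_frontier:
  assumes "y \<in> sector \<alpha>" "Im y \<le> Im (reflect \<alpha> y)"
  shows "of_real (Re y) \<in> frontier (sector \<alpha>)"
  using Re_mult_sin_nonneg[of y \<alpha>] assms mem_sector unfolding frontier_sector
  by (simp add: Im_reflect)

lemma reflected_foot_in_frontier:
  assumes "y \<in> sector \<alpha>" "Im (reflect \<alpha> y) \<le> Im y"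
  shows "reflect \<alpha> (of_real (Re (reflect \<alpha> y))) \<in> frontier (sector \<alpha>)"
  using Re_mult_sin_nonneg[of "reflect \<alpha> y" \<alpha>] assms mem_sector unfolding frontier_sector
  by (simp add: Im_reflect)

lemma bdist_sector:
  assumes y: "y \<in> sector \<alpha>"
  shows "bdist (sector \<alpha>) y = min (Im y) (Im (reflect \<alpha> y))"
proof (rule antisym)
  have yy: "0 < Im y" "0 < Im (reflect \<alpha> y)" using y mem_sector by auto
  show "bdist (sector \<alpha>) y \<le> min (Im y) (Im (reflect \<alpha> y))"
  proof (cases "Im y \<le> Im (reflect \<alpha> y)")
    case True
    have "infdist y (frontier (sector \<alpha>)) \<le> dist y (of_real (Re y))"
      by (rule infdist_le[OF real_foot_in_frontier[OF y True]])
    also have "\<dots> = Im y" using yy by (simp add: dist_norm cmod_def)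
    finally show ?thesis using True by (simp add: bdist_def)
  next
    case False
    have "infdist y (frontier (sector \<alpha>)) \<le> dist y (reflect \<alpha> (of_real (Re (reflect \<alpha> y))))"
      using False by (intro infdist_le[OF reflected_foot_in_frontier[OF y]]) auto
    also have "\<dots> = dist (reflect \<alpha> y) (of_real (Re (reflect \<alpha> y)))"
      by (metis dist_reflect reflect_reflect)
    also have "\<dots> = Im (reflect \<alpha> y)" using yy by (simp add: dist_norm cmod_def)
    finally show ?thesis using False by (simp add: bdist_def)
  qed
next
  have ne: "frontier (sector \<alpha>) \<noteq> {}"
    using real_foot_in_frontier[OF y] reflected_foot_in_frontier[OF y] by force
  show "min (Im y) (Im (reflect \<alpha> y)) \<le> bdist (sector \<alpha>) y"
    unfolding bdist_def infdist_notempty[OF ne]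
  proof (rule cINF_greatest[OF ne])
    fix m assume "m \<in> frontier (sector \<alpha>)"
    then consider "Im m = 0" | "Im (reflect \<alpha> m) = 0" unfolding frontier_sector by blast
    then show "min (Im y) (Im (reflect \<alpha> y)) \<le> dist y m"
    proof cases
      case 1
      then show ?thesis using abs_Im_le_dist_real[of m y] by linarith
    next
      case 2
      then show ?thesis using abs_Im_le_dist_real[of "reflect \<alpha> m" "reflect \<alpha> y"] by simp
    qed
  qed
qed

lemma reflpts_sector_subset:
  assumes y: "y \<in> sector \<alpha>" and x': "x' \<in> reflpts (sector \<alpha>) y"
  shows "Im y = bdist (sector \<alpha>) y \<and> x' = cnj y \<or>
    Im (reflect \<alpha> y) = bdist (sector \<alpha>) y \<and> x' = reflect \<alpha> (cnj (reflect \<alpha> y))"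
proof -
  define d where "d = bdist (sector \<alpha>) y"
  define m where "m = (y + x') / 2"
  have d: "d = min (Im y) (Im (reflect \<alpha> y))" unfolding d_def by (rule bdist_sector[OF y])
  have "dist y x' = 2 * d" and m: "m \<in> frontier (sector \<alpha>)"
    using x' unfolding reflpts_def m_def d_def by auto
  moreover have "dist y m = dist y x' / 2"
    unfolding m_def dist_norm by (simp add: norm_divide[symmetric] field_simps)
  ultimately have dm: "dist y m = d" by simp
  have x': "x' = 2 * m - y" unfolding m_def by (simp add: field_simps)
  from m consider "Im m = 0" | "Im (reflect \<alpha> m) = 0" unfolding frontier_sector by blast
  then show ?thesis
  proof cases
    case 1
    then have e: "Im y = d" "dist y m = Im y" using abs_Im_le_dist_real[OF 1, of y] dm d by linarith+
    then have "m = of_real (Re y)" by (intro dist_eq_Im_imp_foot[OF 1])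
    then have "x' = cnj y" using x' by (simp add: complex_eq_iff)
    then show ?thesis using e by (simp add: d_def)
  next
    case 2
    have "dist (reflect \<alpha> y) (reflect \<alpha> m) = d" using dm by simp
    then have e: "Im (reflect \<alpha> y) = d" "dist (reflect \<alpha> y) (reflect \<alpha> m) = Im (reflect \<alpha> y)"
      using abs_Im_le_dist_real[OF 2, of "reflect \<alpha> y"] d by linarith+
    then have "reflect \<alpha> m = of_real (Re (reflect \<alpha> y))" by (intro dist_eq_Im_imp_foot[OF 2])
    moreover have "reflect \<alpha> x' = 2 * reflect \<alpha> m - reflect \<alpha> y"
      unfolding x' by (simp add: reflect_def algebra_simps)
    ultimately have "reflect \<alpha> x' = cnj (reflect \<alpha> y)" by (simp add: complex_eq_iff)
    then have "x' = reflect \<alpha> (cnj (reflect \<alpha> y))" by (metis reflect_reflect)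
    then show ?thesis using e by (simp add: d_def)
  qed
qed

lemma cnj_in_reflpts_sector:
  assumes y: "y \<in> sector \<alpha>" and "Im y = bdist (sector \<alpha>) y"
  shows "cnj y \<in> reflpts (sector \<alpha>) y"
proof -
  have "Im y \<le> Im (reflect \<alpha> y)" using assms bdist_sector[OF y] by linarith
  from real_foot_in_frontier[OF y this] have "(y + cnj y) / 2 \<in> frontier (sector \<alpha>)"
    by (simp add: complex_add_cnj)
  moreover have "dist y (cnj y) = 2 * bdist (sector \<alpha>) y"
    using assms mem_sector by (simp add: dist_cnj_self)
  ultimately show ?thesis unfolding reflpts_def by simp
qed

lemma reflect_cnj_reflect_in_reflpts_sector:
  assumes y: "y \<in> sector \<alpha>" and "Im (reflect \<alpha> y) = bdist (sector \<alpha>) y"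
  shows "reflect \<alpha> (cnj (reflect \<alpha> y)) \<in> reflpts (sector \<alpha>) y"
proof -
  have "Im (reflect \<alpha> y) \<le> Im y" using assms bdist_sector[OF y] by linarith
  moreover have "of_real (Re (reflect \<alpha> y)) = (reflect \<alpha> y + cnj (reflect \<alpha> y)) / 2"
    by (simp add: complex_add_cnj)
  then have "reflect \<alpha> (of_real (Re (reflect \<alpha> y))) = (y + reflect \<alpha> (cnj (reflect \<alpha> y))) / 2"
    by (simp only: reflect_midpoint reflect_reflect)
  ultimately have "(y + reflect \<alpha> (cnj (reflect \<alpha> y))) / 2 \<in> frontier (sector \<alpha>)"
    using reflected_foot_in_frontier[OF y] by metis
  moreover have "dist y (reflect \<alpha> (cnj (reflect \<alpha> y))) = 2 * bdist (sector \<alpha>) y"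
    using assms mem_sector by (simp add: dist_reflect_cnj_reflect dist_cnj_self)
  ultimately show ?thesis unfolding reflpts_def by simp
qed

lemma reflpts_sector:
  assumes y: "y \<in> sector \<alpha>"
  shows "reflpts (sector \<alpha>) y =
    (if Im y = bdist (sector \<alpha>) y then {cnj y} else {}) \<union>
    (if Im (reflect \<alpha> y) = bdist (sector \<alpha>) y then {reflect \<alpha> (cnj (reflect \<alpha> y))} else {})"
  using reflpts_sector_subset[OF y] cnj_in_reflpts_sector[OF y]
    reflect_cnj_reflect_in_reflpts_sector[OF y]
  by auto

lemma INF_reflpts_sector:
  assumes y: "y \<in> sector \<alpha>"
  shows "(INF y'\<in>reflpts (sector \<alpha>) y. dist x y') =
    (if Im y = bdist (sector \<alpha>) y \<and> Im (reflect \<alpha> y) = bdist (sector \<alpha>) y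
     then min (dist x (cnj y)) (dist x (reflect \<alpha> (cnj (reflect \<alpha> y))))
     else if Im y = bdist (sector \<alpha>) y then dist x (cnj y)
     else dist x (reflect \<alpha> (cnj (reflect \<alpha> y))))"
  using bdist_sector[OF y] unfolding reflpts_sector[OF y]
  by (auto simp: Inf_insert_finite min_def)

lemma w_metric_sector:
  assumes x: "x \<in> sector \<alpha>" and y: "y \<in> sector \<alpha>"
  shows "w_metric (sector \<alpha>) x y = dist x y /
    sqrt (dist x y ^ 2 + 4 * min (Im x * Im y) (Im (reflect \<alpha> x) * Im (reflect \<alpha> y)))"
proof -
  define p q p' q' where "p = Im x" and "q = Im (reflect \<alpha> x)"
    and "p' = Im y" and "q' = Im (reflect \<alpha> y)"
  define E1 E2 where "E1 = dist x (cnj y)" and "E2 = dist x (reflect \<alpha> (cnj (reflect \<alpha> y)))"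
  have pos: "0 < p" "0 < q" "0 < p'" "0 < q'"
    using x y mem_sector unfolding p_def q_def p'_def q'_def by auto
  have I1: "(INF y'\<in>reflpts (sector \<alpha>) y. dist x y') =
     (if p' = min p' q' \<and> q' = min p' q' then min E1 E2 else if p' = min p' q' then E1 else E2)"
    using INF_reflpts_sector[OF y, of x] bdist_sector[OF y]
    unfolding E1_def E2_def p'_def q'_def by simp
  have I2: "(INF x'\<in>reflpts (sector \<alpha>) x. dist y x') =
     (if p = min p q \<and> q = min p q then min E1 E2 else if p = min p q then E1 else E2)"
    using INF_reflpts_sector[OF x, of y] bdist_sector[OF x]
      dist_cnj_commute[of "reflect \<alpha> y" "reflect \<alpha> x"]
    unfolding E1_def E2_def p_def q_def dist_reflect_cnj_reflect
    by (simp add: dist_cnj_commute[of y x])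
  have E: "E1 = sqrt (dist x y ^ 2 + 4 * p * p')" "E2 = sqrt (dist x y ^ 2 + 4 * q * q')"
    unfolding E1_def E2_def p_def q_def p'_def q'_def dist_reflect_cnj_reflect
    by (rule real_sqrt_unique[symmetric], simp add: dist_cnj_sq, simp)+
  have "min (INF y'\<in>reflpts (sector \<alpha>) y. dist x y') (INF x'\<in>reflpts (sector \<alpha>) x. dist y x')
      = min E1 E2"
  proof (cases "p * p' \<le> q * q'")
    case True
    have "\<not> (q < p \<and> q' < p')"
    proof
      assume "q < p \<and> q' < p'"
      then have "q * q' < p * p'" using pos by (intro mult_strict_mono) auto
      with True show False by simp
    qed
    then have "p' = min p' q' \<or> p = min p q" by (auto simp: min_def)
    moreover have "E1 \<le> E2" unfolding E using True by simp
    ultimately show ?thesis unfolding I1 I2 by (auto simp: min_def)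
  next
    case False
    have "\<not> (p < q \<and> p' < q')"
    proof
      assume "p < q \<and> p' < q'"
      then have "p * p' < q * q'" using pos by (intro mult_strict_mono) auto
      with False show False by simp
    qed
    then have "q' = min p' q' \<or> q = min p q" by (auto simp: min_def)
    moreover have "E2 \<le> E1" unfolding E using False by simp
    ultimately show ?thesis unfolding I1 I2 by (auto simp: min_def)
  qed
  also have "min E1 E2 = sqrt (dist x y ^ 2 + 4 * min (p * p') (q * q'))"
    unfolding E by (auto simp: min_def)
  finally show ?thesis unfolding w_metric_def p_def q_def p'_def q'_def by simp
qed

end

section \<open>The w-metric of a sector in polar coordinates\<close>

lemma dist_polar_sq:
  fixes r s \<theta> \<phi> :: real
  assumes "0 < r" "0 < s"
  shows "dist (of_real r * cis \<theta>) (of_real s * cis \<phi>) ^ 2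
    = 4 * r * s * (sinh (ln (s / r) / 2) ^ 2 + sin ((\<theta> - \<phi>) / 2) ^ 2)"
proof -
  have "dist (of_real r * cis \<theta>) (of_real s * cis \<phi>) ^ 2
      = (r * cos \<theta> - s * cos \<phi>)\<^sup>2 + (r * sin \<theta> - s * sin \<phi>)\<^sup>2"
    unfolding dist_norm cmod_power2 by simp
  also have "\<dots> = r\<^sup>2 * (cos \<theta> ^ 2 + sin \<theta> ^ 2) + s\<^sup>2 * (cos \<phi> ^ 2 + sin \<phi> ^ 2)
      - 2 * r * s * (cos \<theta> * cos \<phi> + sin \<theta> * sin \<phi>)"
    by algebra
  also have "\<dots> = r\<^sup>2 + s\<^sup>2 - 2 * r * s * cos (\<theta> - \<phi>)"
    by (simp add: cos_diff)
  also have "cos (\<theta> - \<phi>) = 1 - 2 * sin ((\<theta> - \<phi>) / 2) ^ 2"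
    by (metis cos_double_sin mult_2 field_sum_of_halves)
  also have "r\<^sup>2 + s\<^sup>2 - 2 * r * s * (1 - 2 * sin ((\<theta> - \<phi>) / 2) ^ 2)
      = (r - s)\<^sup>2 + 4 * r * s * sin ((\<theta> - \<phi>) / 2) ^ 2"
    by (simp add: power2_eq_square algebra_simps)
  finally show ?thesis
    using sq_diff_eq_sinh_half_ln[OF assms] by (simp add: algebra_simps)
qed

lemma min_sin_products:
  fixes \<alpha> \<theta> \<phi> :: real
  assumes "\<alpha> \<le> pi" "0 < \<theta>" "\<theta> < \<alpha>" "0 < \<phi>" "\<phi> < \<alpha>"
  shows "min (sin \<theta> * sin \<phi>) (sin (\<alpha> - \<theta>) * sin (\<alpha> - \<phi>))
    = sin (min ((\<theta> + \<phi>) / 2) (\<alpha> - (\<theta> + \<phi>) / 2)) ^ 2 - sin ((\<theta> - \<phi>) / 2) ^ 2"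
proof -
  define \<sigma> b where "\<sigma> = (\<theta> + \<phi>) / 2" and "b = (\<theta> - \<phi>) / 2"
  have e: "\<sigma> + b = \<theta>" "\<sigma> - b = \<phi>" "(\<alpha> - \<sigma>) + b = \<alpha> - \<phi>" "(\<alpha> - \<sigma>) - b = \<alpha> - \<theta>"
    unfolding \<sigma>_def b_def by (simp_all add: field_simps)
  have "sin \<theta> * sin \<phi> = sin \<sigma> ^ 2 - sin b ^ 2"
    using sin_sq_diff[of \<sigma> b] unfolding e by simp
  moreover have "sin (\<alpha> - \<theta>) * sin (\<alpha> - \<phi>) = sin (\<alpha> - \<sigma>) ^ 2 - sin b ^ 2"
    using sin_sq_diff[of "\<alpha> - \<sigma>" b] unfolding e by (simp add: mult.commute)
  moreover have "0 \<le> \<sigma>" "\<sigma> \<le> \<alpha>" using assms unfolding \<sigma>_def by simp_all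
  then have \<sigma>: "0 \<le> \<sigma>" "\<sigma> \<le> pi" "0 \<le> \<alpha> - \<sigma>" "\<alpha> - \<sigma> \<le> pi" using assms by linarith+
  then have "min (sin \<sigma> ^ 2) (sin (\<alpha> - \<sigma>) ^ 2) = sin (min \<sigma> (\<alpha> - \<sigma>)) ^ 2"
  proof (cases "\<sigma> \<le> \<alpha> - \<sigma>")
    case True
    then have "sin \<sigma> ^ 2 \<le> sin (\<alpha> - \<sigma>) ^ 2"
      using sin_le_sin_between[of \<sigma> "\<alpha> - \<sigma>"] \<sigma> assms by (intro power_mono sin_ge_zero) auto
    with True show ?thesis by (simp add: min_def)
  next
    case False
    then have "sin (\<alpha> - \<sigma>) ^ 2 \<le> sin \<sigma> ^ 2"
      using sin_le_sin_between[of "\<alpha> - \<sigma>" \<sigma>] \<sigma> assms by (intro power_mono sin_ge_zero) auto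
    with False show ?thesis by (simp add: min_def)
  qed
  ultimately show ?thesis unfolding \<sigma>_def b_def by (simp add: min_diff_distrib_left)
qed

lemma w_metric_sector_polar:
  fixes \<alpha> r s \<theta> \<phi> :: real
  assumes \<alpha>: "0 < \<alpha>" "\<alpha> \<le> pi" and rs: "0 < r" "0 < s"
    and \<theta>\<phi>: "0 < \<theta>" "\<theta> < \<alpha>" "0 < \<phi>" "\<phi> < \<alpha>"
  shows "w_metric (sector \<alpha>) (of_real r * cis \<theta>) (of_real s * cis \<phi>) =
    sqrt (w_polar_sq (ln (s / r) / 2) (\<bar>\<theta> - \<phi>\<bar> / 2) (min ((\<theta> + \<phi>) / 2) (\<alpha> - (\<theta> + \<phi>) / 2)))"
proof -
  define x y where "x = of_real r * cis \<theta>" and "y = of_real s * cis \<phi>"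
  define A \<rho> \<tau> where "A = sinh (ln (s / r) / 2) ^ 2" and "\<rho> = \<bar>\<theta> - \<phi>\<bar> / 2"
    and "\<tau> = min ((\<theta> + \<phi>) / 2) (\<alpha> - (\<theta> + \<phi>) / 2)"
  have xy: "x \<in> sector \<alpha>" "y \<in> sector \<alpha>"
    unfolding x_def y_def using rs \<theta>\<phi> by (simp_all add: polar_in_sector)
  have "sin ((\<theta> - \<phi>) / 2) ^ 2 = sin \<rho> ^ 2"
  proof (cases "\<theta> \<le> \<phi>")
    case True
    then have "(\<theta> - \<phi>) / 2 = - \<rho>" unfolding \<rho>_def by (simp add: field_simps)
    then show ?thesis by simp
  next
    case False
    then have "(\<theta> - \<phi>) / 2 = \<rho>" unfolding \<rho>_def by (simp add: field_simps)
    then show ?thesis by simp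
  qed
  then have D: "dist x y ^ 2 = 4 * r * s * (A + sin \<rho> ^ 2)"
    unfolding x_def y_def A_def using dist_polar_sq[OF rs] by simp
  have "Im x = r * sin \<theta>" "Im y = s * sin \<phi>"
    "Im (reflect \<alpha> x) = r * sin (\<alpha> - \<theta>)" "Im (reflect \<alpha> y) = s * sin (\<alpha> - \<phi>)"
    unfolding x_def y_def by (simp_all add: reflect_polar)
  then have "min (Im x * Im y) (Im (reflect \<alpha> x) * Im (reflect \<alpha> y))
      = r * s * min (sin \<theta> * sin \<phi>) (sin (\<alpha> - \<theta>) * sin (\<alpha> - \<phi>))"
    using rs by (simp add: min_mult_distrib_left algebra_simps)
  also have "\<dots> = r * s * (sin \<tau> ^ 2 - sin \<rho> ^ 2)"
    unfolding min_sin_products[OF \<alpha>(2) \<theta>\<phi>] \<tau>_def \<open>sin ((\<theta> - \<phi>) / 2) ^ 2 = sin \<rho> ^ 2\<close> ..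
  finally have "dist x y ^ 2 + 4 * min (Im x * Im y) (Im (reflect \<alpha> x) * Im (reflect \<alpha> y))
      = 4 * r * s * (A + sin \<tau> ^ 2)"
    unfolding D by (simp add: algebra_simps)
  moreover have "dist x y = sqrt (4 * r * s * (A + sin \<rho> ^ 2))"
    using D by (simp add: real_sqrt_unique)
  ultimately have "w_metric (sector \<alpha>) x y
      = sqrt (4 * r * s * (A + sin \<rho> ^ 2)) / sqrt (4 * r * s * (A + sin \<tau> ^ 2))"
    unfolding w_metric_sector[OF \<alpha> xy] by simp
  also have "\<dots> = sqrt ((A + sin \<rho> ^ 2) / (A + sin \<tau> ^ 2))"
    using rs by (simp add: real_sqrt_mult real_sqrt_divide)
  finally show ?thesis unfolding x_def y_def A_def \<rho>_def \<tau>_def w_polar_sq_def .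
qed

section \<open>The power map\<close>

lemma powmap_polar:
  fixes r t :: real
  assumes "0 < r" "- pi < t" "t \<le> pi"
  shows "powmap \<alpha> \<beta> (of_real r * cis t) = of_real (r powr (\<beta> / \<alpha>)) * cis (\<beta> / \<alpha> * t)"
proof -
  define w where "w = complex_of_real (ln r) + \<i> * complex_of_real t"
  have z: "of_real r * cis t = exp w"
    unfolding w_def using assms by (simp add: exp_add exp_of_real cis_conv_exp)
  have "ln (exp w) = w" using assms unfolding w_def by (intro Ln_exp) auto
  then have "powmap \<alpha> \<beta> (of_real r * cis t) = exp (complex_of_real (\<beta> / \<alpha>) * w)"
    unfolding powmap_def z by (simp add: powr_def)
  also have "complex_of_real (\<beta> / \<alpha>) * w = of_real (\<beta> / \<alpha> * ln r) + \<i> * of_real (\<beta> / \<alpha> * t)"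
    unfolding w_def by (simp add: algebra_simps)
  also have "exp \<dots> = of_real (exp (\<beta> / \<alpha> * ln r)) * cis (\<beta> / \<alpha> * t)"
    by (simp only: exp_add exp_of_real cis_conv_exp)
  also have "exp (\<beta> / \<alpha> * ln r) = r powr (\<beta> / \<alpha>)" using assms by (simp add: powr_def)
  finally show ?thesis .
qed

lemma w_metric_powmap_polar:
  fixes \<alpha> \<beta> r s \<theta> \<phi> :: real
  assumes \<alpha>\<beta>: "0 < \<alpha>" "\<alpha> \<le> \<beta>" "\<beta> \<le> pi" and rs: "0 < r" "0 < s"
    and \<theta>\<phi>: "0 < \<theta>" "\<theta> < \<alpha>" "0 < \<phi>" "\<phi> < \<alpha>"
  shows "w_metric (sector \<beta>) (powmap \<alpha> \<beta> (of_real r * cis \<theta>)) (powmap \<alpha> \<beta> (of_real s * cis \<phi>)) =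
    sqrt (w_polar_sq (\<beta> / \<alpha> * (ln (s / r) / 2)) (\<beta> / \<alpha> * (\<bar>\<theta> - \<phi>\<bar> / 2))
      (\<beta> / \<alpha> * min ((\<theta> + \<phi>) / 2) (\<alpha> - (\<theta> + \<phi>) / 2)))"
proof -
  define k where "k = \<beta> / \<alpha>"
  have k: "0 < k" "\<beta> = k * \<alpha>" unfolding k_def using \<alpha>\<beta> by simp_all
  have "powmap \<alpha> \<beta> (of_real r * cis \<theta>) = of_real (r powr k) * cis (k * \<theta>)"
    "powmap \<alpha> \<beta> (of_real s * cis \<phi>) = of_real (s powr k) * cis (k * \<phi>)"
    unfolding k_def using powmap_polar rs \<theta>\<phi> \<alpha>\<beta> by simp_all
  moreover have "w_metric (sector \<beta>) (of_real (r powr k) * cis (k * \<theta>)) (of_real (s powr k) * cis (k * \<phi>))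
      = sqrt (w_polar_sq (ln (s powr k / r powr k) / 2) (\<bar>k * \<theta> - k * \<phi>\<bar> / 2)
          (min ((k * \<theta> + k * \<phi>) / 2) (\<beta> - (k * \<theta> + k * \<phi>) / 2)))"
    using \<alpha>\<beta> rs \<theta>\<phi> k by (intro w_metric_sector_polar) auto
  moreover have "ln (s powr k / r powr k) / 2 = k * (ln (s / r) / 2)"
    using rs by (simp add: ln_div algebra_simps)
  moreover have "\<bar>k * \<theta> - k * \<phi>\<bar> / 2 = k * (\<bar>\<theta> - \<phi>\<bar> / 2)"
    using k by (simp add: right_diff_distrib[symmetric] abs_mult)
  moreover have "min ((k * \<theta> + k * \<phi>) / 2) (\<beta> - (k * \<theta> + k * \<phi>) / 2)
      = k * min ((\<theta> + \<phi>) / 2) (\<alpha> - (\<theta> + \<phi>) / 2)"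
    using k by (simp add: min_mult_distrib_left algebra_simps)
  ultimately show ?thesis unfolding k_def by simp
qed

lemma w_metric_powmap_bounds:
  fixes \<alpha> \<beta> :: real
  assumes \<alpha>\<beta>: "0 < \<alpha>" "\<alpha> \<le> \<beta>" "\<beta> \<le> pi" and xy: "x \<in> sector \<alpha>" "y \<in> sector \<alpha>"
  shows "w_metric (sector \<alpha>) x y \<le> w_metric (sector \<beta>) (powmap \<alpha> \<beta> x) (powmap \<alpha> \<beta> y)"
    and "w_metric (sector \<beta>) (powmap \<alpha> \<beta> x) (powmap \<alpha> \<beta> y)
      \<le> \<beta> * sin (\<alpha> / 2) / (\<alpha> * sin (\<beta> / 2)) * w_metric (sector \<alpha>) x y"
proof -
  obtain r \<theta> s \<phi> where x: "0 < r" "0 < \<theta>" "\<theta> < \<alpha>" "x = of_real r * cis \<theta>"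
    and y: "0 < s" "0 < \<phi>" "\<phi> < \<alpha>" "y = of_real s * cis \<phi>"
    using sector_polarE[OF xy(1)] sector_polarE[OF xy(2)] by metis
  define k m \<rho> \<tau> where "k = \<beta> / \<alpha>" and "m = ln (s / r) / 2" and "\<rho> = \<bar>\<theta> - \<phi>\<bar> / 2"
    and "\<tau> = min ((\<theta> + \<phi>) / 2) (\<alpha> - (\<theta> + \<phi>) / 2)"
  have k: "1 \<le> k" "k * \<alpha> \<le> pi" "\<beta> = k * \<alpha>" unfolding k_def using \<alpha>\<beta> by simp_all
  have \<rho>\<tau>: "0 \<le> \<rho>" "\<rho> \<le> \<tau>" "0 < \<tau>" "\<tau> \<le> \<alpha> / 2"
    unfolding \<rho>_def \<tau>_def using x y by (auto simp: min_def abs_if field_simps)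
  have w\<alpha>: "w_metric (sector \<alpha>) x y = sqrt (w_polar_sq m \<rho> \<tau>)"
    unfolding x y m_def \<rho>_def \<tau>_def using \<alpha>\<beta> x y by (intro w_metric_sector_polar) auto
  have w\<beta>: "w_metric (sector \<beta>) (powmap \<alpha> \<beta> x) (powmap \<alpha> \<beta> y) = sqrt (w_polar_sq (k * m) (k * \<rho>) (k * \<tau>))"
    unfolding x y k_def m_def \<rho>_def \<tau>_def using \<alpha>\<beta> x y by (intro w_metric_powmap_polar) auto
  have "k * \<tau> \<le> k * (\<alpha> / 2)" using k \<rho>\<tau> by (intro mult_left_mono) auto
  then have "k * \<tau> \<le> pi / 2" using k(2) by linarith
  then show "w_metric (sector \<alpha>) x y \<le> w_metric (sector \<beta>) (powmap \<alpha> \<beta> x) (powmap \<alpha> \<beta> y)"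
    unfolding w\<alpha> w\<beta> using k \<rho>\<tau> by (intro real_sqrt_le_mono w_polar_sq_le_scaled) auto
  define K where "K = k * sin (\<alpha> / 2) / sin (k * (\<alpha> / 2))"
  have "\<beta> * sin (\<alpha> / 2) / (\<alpha> * sin (\<beta> / 2)) = K"
    unfolding K_def k_def using \<alpha>\<beta> by (simp add: field_simps)
  moreover have "0 \<le> K" unfolding K_def
    by (intro divide_nonneg_nonneg mult_nonneg_nonneg sin_ge_zero; use k \<alpha>\<beta> in linarith)
  moreover have "w_polar_sq (k * m) (k * \<rho>) (k * \<tau>) \<le> K\<^sup>2 * w_polar_sq m \<rho> \<tau>"
    unfolding K_def using k \<rho>\<tau> \<alpha>\<beta> by (intro w_polar_sq_scaled_le) auto
  then have "sqrt (w_polar_sq (k * m) (k * \<rho>) (k * \<tau>)) \<le> sqrt (K\<^sup>2 * w_polar_sq m \<rho> \<tau>)"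
    by (rule real_sqrt_le_mono)
  ultimately show "w_metric (sector \<beta>) (powmap \<alpha> \<beta> x) (powmap \<alpha> \<beta> y)
      \<le> \<beta> * sin (\<alpha> / 2) / (\<alpha> * sin (\<beta> / 2)) * w_metric (sector \<alpha>) x y"
    unfolding w\<alpha> w\<beta> by (simp add: real_sqrt_mult)
qed

lemma w_polar_sq_lower_sharp:
  fixes k \<tau> c :: real
  assumes "sin (k * \<tau>) \<noteq> 0" "1 < c"
  shows "\<exists>M. sqrt (w_polar_sq (k * M) 0 (k * \<tau>)) < c * sqrt (w_polar_sq M 0 \<tau>)"
proof -
  have "0 < c\<^sup>2 - 1" using assms by (simp add: one_less_power)
  \<comment> \<open>large enough for \<open>(c\<^sup>2 - 1) sinh\<^sup>2 M > 1 \<ge> sin\<^sup>2 \<tau>\<close>\<close>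
  define M where "M = 1 / (c\<^sup>2 - 1) + 1"
  have "M \<le> sinh M" "1 \<le> M" unfolding M_def using \<open>0 < c\<^sup>2 - 1\<close> by (simp_all add: sinh_ge_self)
  then have "M \<le> sinh M ^ 2" by (simp add: power2_eq_square) (metis mult_mono mult_1 order_trans zero_le_one)
  moreover have "(c\<^sup>2 - 1) * M = 1 + (c\<^sup>2 - 1)" unfolding M_def using \<open>0 < c\<^sup>2 - 1\<close> by (simp add: field_simps)
  ultimately have "1 < (c\<^sup>2 - 1) * sinh M ^ 2"
    using \<open>0 < c\<^sup>2 - 1\<close> mult_left_mono[of M "sinh M ^ 2" "c\<^sup>2 - 1"] by linarith
  moreover have "sin \<tau> ^ 2 \<le> 1" by (simp add: abs_square_le_1)
  ultimately have "sinh M ^ 2 + sin \<tau> ^ 2 < c\<^sup>2 * sinh M ^ 2" by (simp add: algebra_simps)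
  moreover have "0 < sinh M ^ 2 + sin \<tau> ^ 2" using \<open>1 \<le> M\<close> by (simp add: add_pos_nonneg)
  ultimately have "1 < c\<^sup>2 * w_polar_sq M 0 \<tau>"
    unfolding w_polar_sq_def by (simp add: field_simps)
  then have "1 < sqrt (c\<^sup>2 * w_polar_sq M 0 \<tau>)" by simp
  also have "\<dots> = c * sqrt (w_polar_sq M 0 \<tau>)" using assms(2) by (simp add: real_sqrt_mult)
  finally have "1 < c * sqrt (w_polar_sq M 0 \<tau>)" .
  moreover have "w_polar_sq (k * M) 0 (k * \<tau>) < 1"
    unfolding w_polar_sq_def using assms(1) by (simp add: add_nonneg_pos)
  then have "sqrt (w_polar_sq (k * M) 0 (k * \<tau>)) < 1" by simp
  ultimately show ?thesis by (intro exI[of _ M]) linarith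
qed

lemma w_polar_sq_upper_sharp:
  fixes k \<tau> c :: real
  assumes k: "1 \<le> k" and s: "0 < sin \<tau>" "0 < sin (k * \<tau>)" and c: "c < k * sin \<tau> / sin (k * \<tau>)"
  shows "\<exists>M. c * sqrt (w_polar_sq M 0 \<tau>) < sqrt (w_polar_sq (k * M) 0 (k * \<tau>))"
proof (cases "c \<le> 0")
  case True
  have "0 < w_polar_sq (k * 1) 0 (k * \<tau>)"
    unfolding w_polar_sq_def using k s by (simp add: add_pos_pos)
  moreover have "c * sqrt (w_polar_sq 1 0 \<tau>) \<le> 0"
    using True by (simp add: mult_nonpos_nonneg w_polar_sq_def)
  ultimately show ?thesis by (metis real_sqrt_gt_zero le_less_trans)
next
  case False
  define a b where "a = sin (k * \<tau>) ^ 2" and "b = sin \<tau> ^ 2"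
  have ab: "0 < a" "0 < b" unfolding a_def b_def using s by simp_all
  have "c\<^sup>2 < (k * sin \<tau> / sin (k * \<tau>))\<^sup>2"
    using False c by (intro power_strict_mono) auto
  then have \<delta>: "0 < k\<^sup>2 * b / c\<^sup>2 - a"
    using False ab unfolding a_def b_def by (simp add: field_simps power_divide power_mult_distrib)
  \<comment> \<open>as \<open>M \<rightarrow> 0\<close> the ratio of the two \<open>w\<close> values tends to \<open>k sin \<tau> / sin (k \<tau>)\<close>\<close>
  have "((\<lambda>u. sinh (k * u) ^ 2) \<longlongrightarrow> 0) (at_right 0)"
    by (auto intro!: tendsto_eq_intros)
  from order_tendstoD(2)[OF this \<delta>]
  have "\<forall>\<^sub>F u in at_right 0. sinh (k * u) ^ 2 < k\<^sup>2 * b / c\<^sup>2 - a" .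
  moreover have "\<forall>\<^sub>F u in at_right (0 :: real). 0 < u" by (rule eventually_at_right_less)
  ultimately have "\<forall>\<^sub>F u in at_right 0. 0 < u \<and> sinh (k * u) ^ 2 < k\<^sup>2 * b / c\<^sup>2 - a"
    by eventually_elim auto
  then obtain M where M: "0 < M" "sinh (k * M) ^ 2 < k\<^sup>2 * b / c\<^sup>2 - a"
    using eventually_happens[of _ "at_right (0 :: real)"] by auto
  define A A' where "A = sinh M ^ 2" and "A' = sinh (k * M) ^ 2"
  have A: "0 < A" "0 < A'" "k\<^sup>2 * A \<le> A'"
    unfolding A_def A'_def using M k by (simp_all add: sinh_mult_sq_ge)
  have "c\<^sup>2 * A * (A' + a) * k\<^sup>2 = (c\<^sup>2 * (A' + a)) * (k\<^sup>2 * A)" by (simp add: algebra_simps)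
  also have "\<dots> \<le> (c\<^sup>2 * (A' + a)) * A'" using A ab by (intro mult_left_mono) auto
  also have "\<dots> < (k\<^sup>2 * b) * A'"
    using M False A unfolding A'_def by (intro mult_strict_right_mono) (simp_all add: field_simps)
  also have "\<dots> \<le> (A' * (A + b)) * k\<^sup>2" using A by (simp add: algebra_simps)
  finally have "c\<^sup>2 * A * (A' + a) < A' * (A + b)" using k by simp
  then have "c\<^sup>2 * (A / (A + b)) < A' / (A' + a)"
    using A ab by (simp add: field_simps)
  then have "sqrt (c\<^sup>2 * (A / (A + b))) < sqrt (A' / (A' + a))" by simp
  moreover have "sqrt (c\<^sup>2 * (A / (A + b))) = c * sqrt (w_polar_sq M 0 \<tau>)"
    unfolding real_sqrt_mult using False by (simp add: w_polar_sq_def A_def b_def)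
  moreover have "A' / (A' + a) = w_polar_sq (k * M) 0 (k * \<tau>)"
    unfolding w_polar_sq_def A'_def a_def by simp
  ultimately show ?thesis by metis
qed

lemma w_metric_bisector:
  fixes \<alpha> \<beta> M :: real
  assumes "0 < \<alpha>" "\<alpha> \<le> \<beta>" "\<beta> \<le> pi"
  shows "w_metric (sector \<alpha>) (cis (\<alpha> / 2)) (of_real (exp (2 * M)) * cis (\<alpha> / 2))
      = sqrt (w_polar_sq M 0 (\<alpha> / 2))"
    and "w_metric (sector \<beta>) (powmap \<alpha> \<beta> (cis (\<alpha> / 2))) (powmap \<alpha> \<beta> (of_real (exp (2 * M)) * cis (\<alpha> / 2)))
      = sqrt (w_polar_sq (\<beta> / \<alpha> * M) 0 (\<beta> / \<alpha> * (\<alpha> / 2)))"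
  using w_metric_sector_polar[of \<alpha> 1 "exp (2 * M)" "\<alpha> / 2" "\<alpha> / 2"]
    w_metric_powmap_polar[of \<alpha> \<beta> 1 "exp (2 * M)" "\<alpha> / 2" "\<alpha> / 2"] assms
  by simp_all

theorem lemma5p8:
  fixes \<alpha> \<beta> :: real
  assumes "0 < \<alpha>" and "\<alpha> \<le> \<beta>" and "\<beta> \<le> pi"
  defines "f \<equiv> powmap \<alpha> \<beta>"
  defines "K \<equiv> \<beta> * sin (\<alpha> / 2) / (\<alpha> * sin (\<beta> / 2))"
  shows "(\<forall>x\<in>sector \<alpha>. \<forall>y\<in>sector \<alpha>.
            w_metric (sector \<alpha>) x y \<le> w_metric (sector \<beta>) (f x) (f y) \<and>
            w_metric (sector \<beta>) (f x) (f y) \<le> K * w_metric (sector \<alpha>) x y)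
       \<and> (\<forall>c>1. \<exists>x\<in>sector \<alpha>. \<exists>y\<in>sector \<alpha>.
            w_metric (sector \<beta>) (f x) (f y) < c * w_metric (sector \<alpha>) x y)
       \<and> (\<forall>c<K. \<exists>x\<in>sector \<alpha>. \<exists>y\<in>sector \<alpha>.
            c * w_metric (sector \<alpha>) x y < w_metric (sector \<beta>) (f x) (f y))"
proof -
  define k where "k = \<beta> / \<alpha>"
  have k: "1 \<le> k" "\<beta> = k * \<alpha>" unfolding k_def using assms by simp_all
  then have "k * (\<alpha> / 2) = \<beta> / 2" by simp
  then have sin: "0 < sin (\<alpha> / 2)" "0 < sin (k * (\<alpha> / 2))"
    using assms pi_gt_zero by (intro sin_gt_zero; linarith)+
  have K: "K = k * sin (\<alpha> / 2) / sin (k * (\<alpha> / 2))"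
    unfolding K_def k_def using assms by (simp add: field_simps)
  have on_bisector: "cis (\<alpha> / 2) \<in> sector \<alpha>" "of_real (exp (2 * M)) * cis (\<alpha> / 2) \<in> sector \<alpha>" for M
    using polar_in_sector[of 1 "\<alpha> / 2" \<alpha>] polar_in_sector[of "exp (2 * M)" "\<alpha> / 2" \<alpha>] assms by simp_all
  note w = w_metric_bisector[OF assms(1-3), folded k_def f_def]
  have "\<exists>x\<in>sector \<alpha>. \<exists>y\<in>sector \<alpha>. w_metric (sector \<beta>) (f x) (f y) < c * w_metric (sector \<alpha>) x y"
    if c: "1 < c" for c
  proof -
    obtain M where "sqrt (w_polar_sq (k * M) 0 (k * (\<alpha> / 2))) < c * sqrt (w_polar_sq M 0 (\<alpha> / 2))"
      using w_polar_sq_lower_sharp[of k "\<alpha> / 2" c] sin c by auto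
    then show ?thesis using on_bisector unfolding w(1)[symmetric] w(2)[symmetric] by blast
  qed
  moreover have "\<exists>x\<in>sector \<alpha>. \<exists>y\<in>sector \<alpha>. c * w_metric (sector \<alpha>) x y < w_metric (sector \<beta>) (f x) (f y)"
    if c: "c < K" for c
  proof -
    obtain M where "c * sqrt (w_polar_sq M 0 (\<alpha> / 2)) < sqrt (w_polar_sq (k * M) 0 (k * (\<alpha> / 2)))"
      using w_polar_sq_upper_sharp[of k "\<alpha> / 2" c] k sin c unfolding K by auto
    then show ?thesis using on_bisector unfolding w(1)[symmetric] w(2)[symmetric] by blast
  qed
  ultimately show ?thesis
    using w_metric_powmap_bounds[OF assms(1-3)] unfolding f_def K_def by blast
qed

end
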